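(* Let $W$ be a nonempty closed subset of $\mathbb{R}$ and let $\alpha,\beta,z\in\mathrm{Aut}(W)$. Suppose $\mathrm{Fix}_W(z)=\emptyset$ and $z$ commutes with both $\alpha$ and $\beta$. If $\mathrm{Fix}_W(\alpha)\ne\emptyset\ne\mathrm{Fix}_W(\beta)$ and $\mathrm{Fix}_W(\alpha)\cap\mathrm{Fix}_W(\beta)=\emptyset$, then $\langle\alpha,\beta\rangle$ contains a nonabelian free subgroup.
   Context: For a totally ordered set $X$ (here $W\subseteq\mathbb{R}$ with the induced order), $\mathrm{Aut}(X)$ is the group of order preserving bijections $X\to X$. For a group $G$ acting on $Y$ and $H\subseteq G$, $\mathrm{Fix}_Y(H)=\{y\in Y: hy=y\ \forall h\in H\}$, and $\mathrm{Fix}_Y(g)=\mathrm{Fix}_Y(\{g\})$. *)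

theory Defs
  imports "HOL-Analysis.Analysis" "HOL-Algebra.Bij" "HOL-Algebra.Generated_Groups"
begin

text \<open>Aut(W): order preserving bijections W \<rightarrow> W, as elements of the group
  BijGroup W (functions extensional on W, composition as product).\<close>
definition Aut_ord :: "real set \<Rightarrow> (real \<Rightarrow> real) set" where
  "Aut_ord W = {f \<in> Bij W. mono_on W f}"

definition Fix_on :: "'a set \<Rightarrow> ('a \<Rightarrow> 'a) \<Rightarrow> 'a set" where
  "Fix_on Y g = {y \<in> Y. g y = y}"

text \<open>Words over a set S of group elements: letters (s, True) = s, (s, False) = s inverse.\<close>
definition word_eval :: "('g, 'b) monoid_scheme \<Rightarrow> ('g \<times> bool) list \<Rightarrow> 'g" where
  "word_eval G w = foldr (\<lambda>(s, e) acc. (if e then s else inv\<^bsub>G\<^esub> s) \<otimes>\<^bsub>G\<^esub> acc) w \<one>\<^bsub>G\<^esub>"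

definition reduced_word :: "('g \<times> bool) list \<Rightarrow> bool" where
  "reduced_word w \<longleftrightarrow> (\<forall>i. Suc i < length w \<longrightarrow>
      \<not> (fst (w ! i) = fst (w ! Suc i) \<and> snd (w ! i) \<noteq> snd (w ! Suc i)))"

definition free_basis :: "('g, 'b) monoid_scheme \<Rightarrow> 'g set \<Rightarrow> bool" where
  "free_basis G S \<longleftrightarrow> S \<subseteq> carrier G \<and>
     (\<forall>w. set (map fst w) \<subseteq> S \<longrightarrow> reduced_word w \<longrightarrow> w \<noteq> [] \<longrightarrow> word_eval G w \<noteq> \<one>\<^bsub>G\<^esub>)"

definition contains_nonabelian_free :: "('g, 'b) monoid_scheme \<Rightarrow> 'g set \<Rightarrow> bool" where
  "contains_nonabelian_free G H \<longleftrightarrow>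
     (\<exists>S. S \<subseteq> H \<and> free_basis G S \<and> (\<exists>a b. a \<in> S \<and> b \<in> S \<and> a \<noteq> b))"

end

theory Submission
  imports Defs
begin

text \<open>
  The translation \<open>z\<close> makes \<open>W\<close> a line covering a circle on which \<open>\<alpha>\<close> and \<open>\<beta>\<close> act.
  Their fixed point sets are closed, disjoint and invariant under \<open>z\<close>, hence unbounded.
  Starting at a fixed point \<open>p\<close> of \<open>\<alpha>\<close> with \<open>p < z p\<close>, take alternately the first fixed
  point of \<open>\<beta>\<close> and of \<open>\<alpha>\<close> above the previous one. Each point of this chain lies in a
  complementary interval (an arc) of the fixed points of the other generator, consecutive arcs
  overlap, and the chain is periodic: after an even number of steps it is translated by \<open>z\<close>.
  A generator moves all points of one of its arcs in the same direction, so a large power of it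
  pushes the part of the arc between the two overlaps into either end of the arc. The unions of
  these ends, saturated under \<open>z\<close>, are ping-pong sets for the powers of \<open>\<alpha>\<close> and \<open>\<beta>\<close> and
  their inverses, which therefore generate a free group of rank two.
\<close>

section \<open>Bijections and order automorphisms\<close>

lemma Aut_ord_Bij: "f \<in> Aut_ord W \<Longrightarrow> f \<in> Bij W"
  by (simp add: Aut_ord_def)

lemma Bij_mem: "f \<in> Bij W \<Longrightarrow> x \<in> W \<Longrightarrow> f x \<in> W"
  using Bij_imp_funcset by blast

lemma Aut_ord_mem: "f \<in> Aut_ord W \<Longrightarrow> x \<in> W \<Longrightarrow> f x \<in> W"
  by (simp add: Aut_ord_Bij Bij_mem)

lemma Aut_ord_strict_mono_on: "f \<in> Aut_ord W \<Longrightarrow> strict_mono_on W f"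
  by (auto simp: Aut_ord_def Bij_def bij_betw_def intro: mono_imp_strict_mono)

lemma Aut_ord_less_iff: "f \<in> Aut_ord W \<Longrightarrow> x \<in> W \<Longrightarrow> y \<in> W \<Longrightarrow> f x < f y \<longleftrightarrow> x < y"
  by (rule strict_mono_on_less[OF Aut_ord_strict_mono_on])

lemma Aut_ord_le_iff: "f \<in> Aut_ord W \<Longrightarrow> x \<in> W \<Longrightarrow> y \<in> W \<Longrightarrow> f x \<le> f y \<longleftrightarrow> x \<le> y"
  by (rule strict_mono_on_less_eq[OF Aut_ord_strict_mono_on])

definition bij_inv :: "'a set \<Rightarrow> ('a \<Rightarrow> 'a) \<Rightarrow> 'a \<Rightarrow> 'a" where
  "bij_inv W f = restrict (inv_into W f) W"

lemma inv_BijGroup_eq_bij_inv: "f \<in> Bij W \<Longrightarrow> inv\<^bsub>BijGroup W\<^esub> f = bij_inv W f"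
  by (simp add: inv_BijGroup bij_inv_def)

lemma bij_inv_Bij: "f \<in> Bij W \<Longrightarrow> bij_inv W f \<in> Bij W"
  by (simp add: bij_inv_def restrict_inv_into_Bij)

lemma bij_inv_apply: "f \<in> Bij W \<Longrightarrow> x \<in> W \<Longrightarrow> bij_inv W f (f x) = x"
  by (simp add: bij_inv_def Bij_def Bij_mem bij_betw_def)

lemma apply_bij_inv: "f \<in> Bij W \<Longrightarrow> x \<in> W \<Longrightarrow> f (bij_inv W f x) = x"
  by (simp add: bij_inv_def Bij_def bij_betw_def f_inv_into_f)

lemma Aut_ord_bij_inv: assumes f: "f \<in> Aut_ord W" shows "bij_inv W f \<in> Aut_ord W"
proof -
  have "bij_inv W f r \<le> bij_inv W f s" if "r \<in> W" "s \<in> W" "r \<le> s" for r s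
    using that Aut_ord_le_iff[OF f, of "bij_inv W f r" "bij_inv W f s"]
    by (simp add: Aut_ord_Bij[OF f] apply_bij_inv Bij_mem bij_inv_Bij)
  then show ?thesis
    by (simp add: Aut_ord_def Aut_ord_Bij[OF f] bij_inv_Bij mono_onI)
qed

lemma less_bij_inv_iff:
  assumes "f \<in> Aut_ord W" "x \<in> W" "y \<in> W" shows "x < bij_inv W f y \<longleftrightarrow> f x < y"
  using Aut_ord_less_iff[OF assms(1,2), of "bij_inv W f y"] assms
  by (simp add: Aut_ord_Bij apply_bij_inv Bij_mem bij_inv_Bij)

lemma bij_inv_less_iff:
  assumes "f \<in> Aut_ord W" "x \<in> W" "y \<in> W" shows "bij_inv W f x < y \<longleftrightarrow> x < f y"
  using Aut_ord_less_iff[OF assms(1) _ assms(3), of "bij_inv W f x"] assms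
  by (simp add: Aut_ord_Bij apply_bij_inv Bij_mem bij_inv_Bij)

lemma bij_inv_fixed: "f \<in> Bij W \<Longrightarrow> x \<in> W \<Longrightarrow> f x = x \<Longrightarrow> bij_inv W f x = x"
  by (metis bij_inv_apply)

lemma bij_inv_commute:
  assumes "f \<in> Bij W" "z \<in> Bij W" "\<And>x. x \<in> W \<Longrightarrow> z (f x) = f (z x)" "x \<in> W"
  shows "bij_inv W z (f x) = f (bij_inv W z x)"
proof -
  have y: "bij_inv W z x \<in> W" using assms by (simp add: Bij_mem bij_inv_Bij)
  have "z (f (bij_inv W z x)) = f x" using assms(3)[OF y] apply_bij_inv[OF assms(2,4)] by simp
  then have "bij_inv W z (f x) = bij_inv W z (z (f (bij_inv W z x)))" by simp
  also have "\<dots> = f (bij_inv W z x)" using bij_inv_apply[OF assms(2) Bij_mem[OF assms(1) y]] .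
  finally show ?thesis .
qed

lemma carrier_BijGroup: "carrier (BijGroup W) = Bij W"
  by (simp add: BijGroup_def)

lemma mult_BijGroup_apply:
  "f \<in> Bij W \<Longrightarrow> g \<in> Bij W \<Longrightarrow> x \<in> W \<Longrightarrow> (f \<otimes>\<^bsub>BijGroup W\<^esub> g) x = f (g x)"
  by (simp add: BijGroup_def compose_def)

lemma pow_BijGroup_apply:
  assumes "f \<in> Bij W" "x \<in> W" shows "(f [^]\<^bsub>BijGroup W\<^esub> (n::nat)) x = (f ^^ n) x"
  using assms(2)
proof (induction n arbitrary: x)
  case 0
  then show ?case by (simp add: BijGroup_def)
next
  case (Suc n)
  have "f [^]\<^bsub>BijGroup W\<^esub> n \<in> Bij W"
    using monoid.nat_pow_closed[OF group.is_monoid[OF group_BijGroup], of f W n] assms(1)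
    by (simp add: carrier_BijGroup)
  with Suc assms(1) show ?case
    by (simp add: mult_BijGroup_apply Bij_mem funpow_Suc_right del: funpow.simps)
qed

lemma BijGroup_commute_apply:
  assumes "f \<in> Bij W" "g \<in> Bij W" "f \<otimes>\<^bsub>BijGroup W\<^esub> g = g \<otimes>\<^bsub>BijGroup W\<^esub> f" "x \<in> W"
  shows "f (g x) = g (f x)"
  using mult_BijGroup_apply[OF assms(1,2,4)] mult_BijGroup_apply[OF assms(2,1,4)] assms(3) by simp

lemma funpow_mem: "(\<And>x. x \<in> W \<Longrightarrow> f x \<in> W) \<Longrightarrow> x \<in> W \<Longrightarrow> (f ^^ n) x \<in> W"
  by (induction n) auto

lemma Aut_ord_funpow_less_iff:
  assumes "f \<in> Aut_ord W" "x \<in> W" "y \<in> W" shows "(f ^^ n) x < (f ^^ n) y \<longleftrightarrow> x < y"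
  by (induction n)
    (simp_all add: assms Aut_ord_less_iff[OF assms(1)] funpow_mem[OF Aut_ord_mem[OF assms(1)]])

lemma Aut_ord_funpow_le_iff:
  assumes "f \<in> Aut_ord W" "x \<in> W" "y \<in> W" shows "(f ^^ n) x \<le> (f ^^ n) y \<longleftrightarrow> x \<le> y"
  by (induction n)
    (simp_all add: assms Aut_ord_le_iff[OF assms(1)] funpow_mem[OF Aut_ord_mem[OF assms(1)]])

lemma funpow_fixed: "f x = x \<Longrightarrow> (f ^^ n) x = x"
  by (induction n) simp_all

lemma funpow_left_inverse:
  assumes "\<And>x. x \<in> W \<Longrightarrow> f x \<in> W" "\<And>x. x \<in> W \<Longrightarrow> g (f x) = x" "y \<in> W"
  shows "(g ^^ n) ((f ^^ n) y) = y"
  using assms(3)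
proof (induction n arbitrary: y)
  case (Suc n)
  have "(g ^^ Suc n) ((f ^^ Suc n) y) = g ((g ^^ n) ((f ^^ n) (f y)))"
    by (simp add: funpow_swap1)
  with Suc assms show ?case by simp
qed simp

lemma funpow_commute_on:
  assumes "\<And>x. x \<in> W \<Longrightarrow> f x \<in> W" "\<And>x. x \<in> W \<Longrightarrow> g x \<in> W"
    and "\<And>x. x \<in> W \<Longrightarrow> g (f x) = f (g x)" and "x \<in> W"
  shows "(g ^^ n) ((f ^^ m) x) = (f ^^ m) ((g ^^ n) x)"
proof -
  have "g ((f ^^ m) y) = (f ^^ m) (g y)" if "y \<in> W" for y
    using that by (induction m) (simp_all add: assms funpow_mem)
  then show ?thesis
    using assms(4) by (induction n) (simp_all add: assms funpow_mem)
qed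

lemma Aut_ord_orbit_incseq:
  assumes "f \<in> Aut_ord W" "x \<in> W" "x \<le> f x" shows "incseq (\<lambda>n. (f ^^ n) x)"
proof (rule incseq_SucI)
  fix n
  show "(f ^^ n) x \<le> (f ^^ Suc n) x"
    using Aut_ord_funpow_le_iff[OF assms(1,2) Aut_ord_mem[OF assms(1,2)], of n] assms(3)
    by (simp add: funpow_Suc_right del: funpow.simps)
qed

section \<open>Fixed points\<close>

lemma Fix_on_iff: "x \<in> Fix_on W f \<longleftrightarrow> x \<in> W \<and> f x = x"
  by (simp add: Fix_on_def)

text \<open>A fixed point lies above \<open>f x\<close> iff it lies above \<open>x\<close>, and likewise for the inverse; so no
  fixed point lies strictly between \<open>f x\<close> and \<open>bij_inv W f x\<close>, which are on either side of a
  non-fixed point \<open>x\<close>.\<close>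
lemma closed_Fix_on:
  assumes W: "closed W" and f: "f \<in> Aut_ord W" shows "closed (Fix_on W f)"
  unfolding closed_def
proof (subst open_subopen, intro ballI)
  fix x assume "x \<in> - Fix_on W f"
  show "\<exists>U. open U \<and> x \<in> U \<and> U \<subseteq> - Fix_on W f"
  proof (cases "x \<in> W")
    case False
    have "- W \<subseteq> - Fix_on W f" by (auto simp: Fix_on_iff)
    with False W show ?thesis unfolding closed_def by blast
  next
    case xW: True
    define g where "g = bij_inv W f"
    have "f x \<noteq> x" using \<open>x \<in> - Fix_on W f\<close> xW by (simp add: Fix_on_iff)
    moreover have "g x \<noteq> x"
      using apply_bij_inv[OF Aut_ord_Bij[OF f] xW] \<open>f x \<noteq> x\<close> by (auto simp: g_def)
    moreover have "x < g x \<longleftrightarrow> f x < x"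
      using less_bij_inv_iff[OF f xW xW] by (simp add: g_def)
    ultimately have between: "min (f x) (g x) < x \<and> x < max (f x) (g x)"
      by (cases "f x < x") auto
    have side: "f x < y \<longleftrightarrow> x < y" "g x < y \<longleftrightarrow> x < y" if "y \<in> Fix_on W f" for y
      using that Aut_ord_less_iff[OF f xW, of y] bij_inv_less_iff[OF f xW, of y]
      unfolding g_def Fix_on_iff by auto
    have "y \<notin> Fix_on W f" if "min (f x) (g x) < y" "y < max (f x) (g x)" for y
    proof
      assume fixed: "y \<in> Fix_on W f"
      with that(1) have "x < y" using side by (auto simp: min_less_iff_disj)
      with fixed have "max (f x) (g x) < y" using side by simp
      with that(2) show False by simp
    qed
    then have "{min (f x) (g x) <..< max (f x) (g x)} \<subseteq> - Fix_on W f" by auto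
    with between show ?thesis by (intro exI[of _ "{min (f x) (g x) <..< max (f x) (g x)}"]) auto
  qed
qed

lemma Fix_on_shift_invariant:
  assumes f: "f \<in> Bij W" and z: "z \<in> Bij W" and commute: "\<And>x. x \<in> W \<Longrightarrow> z (f x) = f (z x)"
  shows "z ` Fix_on W f \<subseteq> Fix_on W f" "bij_inv W z ` Fix_on W f \<subseteq> Fix_on W f"
proof -
  show "z ` Fix_on W f \<subseteq> Fix_on W f"
  proof
    fix y assume "y \<in> z ` Fix_on W f"
    then obtain x where "x \<in> W" "f x = x" "y = z x" by (auto simp: Fix_on_iff)
    then show "y \<in> Fix_on W f" using commute[of x] Bij_mem[OF z] by (simp add: Fix_on_iff)
  qed
  show "bij_inv W z ` Fix_on W f \<subseteq> Fix_on W f"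
  proof
    fix y assume "y \<in> bij_inv W z ` Fix_on W f"
    then obtain x where x: "x \<in> W" "f x = x" "y = bij_inv W z x" by (auto simp: Fix_on_iff)
    have "f y = f (bij_inv W z x)" using x(3) by simp
    also have "\<dots> = bij_inv W z (f x)" using bij_inv_commute[of f W z x, OF f z commute x(1)] by simp
    also have "\<dots> = y" using x(2,3) by simp
    finally show "y \<in> Fix_on W f" using x Bij_mem[OF bij_inv_Bij[OF z]] by (simp add: Fix_on_iff)
  qed
qed

lemma Fix_on_bij_inv: assumes "f \<in> Bij W" shows "Fix_on W (bij_inv W f) = Fix_on W f"
proof -
  have "bij_inv W f x = x \<longleftrightarrow> f x = x" if "x \<in> W" for x
    using apply_bij_inv[OF assms that] bij_inv_fixed[OF assms that] by metis
  then show ?thesis by (auto simp: Fix_on_iff)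
qed

lemma moved_point_between:
  assumes f: "f \<in> Aut_ord W" and x: "x \<in> W" "f x \<noteq> x" and t: "t \<in> Fix_on W f" "x < t"
  shows "\<exists>u\<in>W. x < u \<and> u < t"
proof (cases "x < f x")
  case True
  then show ?thesis
    using t Aut_ord_less_iff[OF f x(1), of t] Aut_ord_mem[OF f x(1)] by (auto simp: Fix_on_iff)
next
  case False
  then have "x < bij_inv W f x" using x less_bij_inv_iff[OF f x(1) x(1)] by simp
  moreover have "bij_inv W f x < t" using t bij_inv_less_iff[OF f x(1), of t] by (simp add: Fix_on_iff)
  ultimately show ?thesis using Bij_mem[OF bij_inv_Bij[OF Aut_ord_Bij[OF f]] x(1)] by blast
qed

text \<open>The supremum of the orbit is fixed: \<open>f\<close> and its inverse both map it to an upper bound of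
  the orbit.\<close>
lemma bounded_orbit_fixed_point:
  assumes W: "closed W" and f: "f \<in> Aut_ord W" and x: "x \<in> W" "x \<le> f x"
    and bound: "\<And>n. (f ^^ n) x \<le> c"
  shows "\<exists>y\<in>Fix_on W f. x \<le> y \<and> y \<le> c"
proof -
  define S where "S = range (\<lambda>n. (f ^^ n) x)"
  have S: "S \<subseteq> W" "S \<noteq> {}" "bdd_above S"
    using bound funpow_mem[OF Aut_ord_mem[OF f] x(1)] by (auto simp: S_def bdd_above_def)
  define L where "L = Sup S"
  have LW: "L \<in> W" using closed_subset_contains_Sup[OF W S] by (simp add: L_def)
  have upper: "(f ^^ n) x \<le> L" for n
    using cSup_upper[OF _ S(3)] by (simp add: S_def L_def)
  have orbit_W: "(f ^^ n) x \<in> W" for n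
    using funpow_mem[OF Aut_ord_mem[OF f] x(1)] .
  have "(f ^^ n) x \<le> f L" for n
  proof (cases n)
    case 0
    then show ?thesis using x(2) upper[of 0] Aut_ord_le_iff[OF f x(1) LW] by simp
  next
    case (Suc k)
    then show ?thesis using upper[of k] Aut_ord_le_iff[OF f orbit_W LW] by simp
  qed
  then have "Sup S \<le> f L" using S(2) unfolding S_def by (auto intro: cSup_least)
  moreover have "(f ^^ n) x \<le> bij_inv W f L" for n
    using upper[of "Suc n"] bij_inv_less_iff[OF f LW orbit_W, of n] by (simp add: not_less[symmetric])
  then have "Sup S \<le> bij_inv W f L" using S(2) unfolding S_def by (auto intro: cSup_least)
  then have "f L \<le> L"
    using Aut_ord_le_iff[OF f LW] apply_bij_inv[OF Aut_ord_Bij[OF f] LW]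
      Bij_mem[OF bij_inv_Bij[OF Aut_ord_Bij[OF f]] LW] by (metis L_def)
  moreover have "x \<le> L" "L \<le> c"
    using upper[of 0] S(2) bound by (auto simp: L_def S_def intro!: cSup_least)
  ultimately show ?thesis using LW by (auto simp: Fix_on_iff L_def)
qed

lemma shift_invariant_unbounded:
  assumes W: "closed W" and z: "z \<in> Aut_ord W" "Fix_on W z = {}"
    and T: "t \<in> T" "T \<subseteq> W" "z ` T \<subseteq> T" "bij_inv W z ` T \<subseteq> T"
  shows "\<exists>s\<in>T. c < s"
proof -
  have tW: "t \<in> W" using T by blast
  obtain g where g: "g \<in> Aut_ord W" "Fix_on W g = {}" "g ` T \<subseteq> T" "t \<le> g t"
  proof (cases "t \<le> z t")
    case True
    then show ?thesis using that z T by blast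
  next
    case False
    have "Fix_on W (bij_inv W z) = {}" using Fix_on_bij_inv[OF Aut_ord_Bij[OF z(1)]] z(2) by simp
    moreover have "t \<le> bij_inv W z t" using False less_bij_inv_iff[OF z(1) tW tW] by simp
    ultimately show ?thesis using that Aut_ord_bij_inv[OF z(1)] T by blast
  qed
  have "\<not> (\<forall>n. (g ^^ n) t \<le> c)"
    using bounded_orbit_fixed_point[OF W g(1) tW g(4), of c] g(2) by blast
  then obtain n where "c < (g ^^ n) t" by (auto simp: not_le)
  moreover have "(g ^^ n) t \<in> T" using funpow_mem[of T g] g(3) T(1) by blast
  ultimately show ?thesis by blast
qed

lemma Fix_on_unbounded_above:
  assumes W: "closed W" and z: "z \<in> Aut_ord W" "Fix_on W z = {}"
    and f: "f \<in> Bij W" "\<And>x. x \<in> W \<Longrightarrow> z (f x) = f (z x)" "Fix_on W f \<noteq> {}"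
  shows "\<exists>t\<in>Fix_on W f. c < t"
proof -
  obtain t where "t \<in> Fix_on W f" using f(3) by blast
  moreover have "Fix_on W f \<subseteq> W" by (auto simp: Fix_on_iff)
  ultimately show ?thesis
    using shift_invariant_unbounded[OF W z _ _ Fix_on_shift_invariant[of f W z, OF f(1) Aut_ord_Bij[OF z(1)] f(2)]]
    by blast
qed

definition next_in :: "real set \<Rightarrow> real \<Rightarrow> real" where
  "next_in T x = Inf {t \<in> T. x < t}"

definition prev_in :: "real set \<Rightarrow> real \<Rightarrow> real" where
  "prev_in T x = Sup {t \<in> T. t < x}"

lemma next_in_le: "t \<in> T \<Longrightarrow> x < t \<Longrightarrow> next_in T x \<le> t"
  unfolding next_in_def by (rule cInf_lower) (auto simp: bdd_below_def intro: less_imp_le)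

lemma prev_in_ge: "t \<in> T \<Longrightarrow> t < x \<Longrightarrow> t \<le> prev_in T x"
  unfolding prev_in_def by (rule cSup_upper) (auto simp: bdd_above_def intro: less_imp_le)

lemma next_in_mem:
  assumes "closed T" "x \<notin> T" "t \<in> T" "x < t"
  shows "next_in T x \<in> T" "x < next_in T x"
proof -
  have ne: "{t \<in> T. x < t} \<noteq> {}" and bdd: "bdd_below {t \<in> T. x < t}"
    using assms by (auto simp: bdd_below_def intro: less_imp_le)
  show mem: "next_in T x \<in> T"
    unfolding next_in_def using closed_subset_contains_Inf[OF assms(1) _ ne bdd] by blast
  have "x \<le> next_in T x" unfolding next_in_def using ne by (auto intro: cInf_greatest)
  with mem assms(2) show "x < next_in T x" by (cases "x = next_in T x") auto
qed

lemma prev_in_mem: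
  assumes "closed T" "x \<notin> T" "t \<in> T" "t < x"
  shows "prev_in T x \<in> T" "prev_in T x < x"
proof -
  have ne: "{t \<in> T. t < x} \<noteq> {}" and bdd: "bdd_above {t \<in> T. t < x}"
    using assms by (auto simp: bdd_above_def intro: less_imp_le)
  show mem: "prev_in T x \<in> T"
    unfolding prev_in_def using closed_subset_contains_Sup[OF assms(1) _ ne bdd] by blast
  have "prev_in T x \<le> x" unfolding prev_in_def using ne by (auto intro: cSup_least)
  with mem assms(2) show "prev_in T x < x" by (cases "x = prev_in T x") auto
qed

lemma next_in_eqI: "t \<in> T \<Longrightarrow> x < t \<Longrightarrow> (\<And>s. s \<in> T \<Longrightarrow> x < s \<Longrightarrow> t \<le> s) \<Longrightarrow> next_in T x = t"
  unfolding next_in_def by (intro cInf_eq_minimum) auto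

lemma prev_in_eqI: "t \<in> T \<Longrightarrow> t < x \<Longrightarrow> (\<And>s. s \<in> T \<Longrightarrow> s < x \<Longrightarrow> s \<le> t) \<Longrightarrow> prev_in T x = t"
  unfolding prev_in_def by (intro cSup_eq_maximum) auto

lemma next_in_shift:
  assumes z: "z \<in> Aut_ord W" and T: "closed T" "T \<subseteq> W" "z ` T \<subseteq> T" "bij_inv W z ` T \<subseteq> T"
    and x: "x \<in> W" "x \<notin> T" "t \<in> T" "x < t"
  shows "next_in T (z x) = z (next_in T x)"
proof (rule next_in_eqI)
  note n = next_in_mem[OF T(1) x(2-4)]
  show "z (next_in T x) \<in> T" using n(1) T(3) by blast
  show "z x < z (next_in T x)" using n Aut_ord_less_iff[OF z x(1), of "next_in T x"] T(2) by blast
  fix s assume s: "s \<in> T" "z x < s"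
  have "bij_inv W z s \<in> T" "x < bij_inv W z s"
    using s T(2,4) less_bij_inv_iff[OF z x(1), of s] by auto
  then have "next_in T x \<le> bij_inv W z s" by (rule next_in_le)
  then show "z (next_in T x) \<le> s"
    using Aut_ord_le_iff[OF z] apply_bij_inv[OF Aut_ord_Bij[OF z]] n(1) s(1) T(2)
      \<open>bij_inv W z s \<in> T\<close> by (metis subsetD)
qed

lemma prev_in_shift:
  assumes z: "z \<in> Aut_ord W" and T: "closed T" "T \<subseteq> W" "z ` T \<subseteq> T" "bij_inv W z ` T \<subseteq> T"
    and x: "x \<in> W" "x \<notin> T" "t \<in> T" "t < x"
  shows "prev_in T (z x) = z (prev_in T x)"
proof (rule prev_in_eqI)
  note n = prev_in_mem[OF T(1) x(2-4)]
  show "z (prev_in T x) \<in> T" using n(1) T(3) by blast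
  show "z (prev_in T x) < z x" using n Aut_ord_less_iff[OF z _ x(1), of "prev_in T x"] T(2) by blast
  fix s assume s: "s \<in> T" "s < z x"
  have "bij_inv W z s \<in> T" "bij_inv W z s < x"
    using s T(2,4) bij_inv_less_iff[OF z _ x(1), of s] by auto
  then have "bij_inv W z s \<le> prev_in T x" by (rule prev_in_ge)
  then show "s \<le> z (prev_in T x)"
    using Aut_ord_le_iff[OF z] apply_bij_inv[OF Aut_ord_Bij[OF z]] n(1) s(1) T(2)
      \<open>bij_inv W z s \<in> T\<close> by (metis subsetD)
qed

section \<open>Ping-pong\<close>

definition letter_eval :: "('g, 'b) monoid_scheme \<Rightarrow> 'g \<times> bool \<Rightarrow> 'g" where
  "letter_eval G l = (if snd l then fst l else inv\<^bsub>G\<^esub> (fst l))"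

lemma word_eval_Nil: "word_eval G [] = \<one>\<^bsub>G\<^esub>"
  by (simp add: word_eval_def)

lemma word_eval_Cons: "word_eval G (l # w) = letter_eval G l \<otimes>\<^bsub>G\<^esub> word_eval G w"
  by (cases l) (simp add: word_eval_def letter_eval_def)

lemma letter_eval_Bij: "fst l \<in> Bij W \<Longrightarrow> letter_eval (BijGroup W) l \<in> Bij W"
  by (simp add: letter_eval_def inv_BijGroup_eq_bij_inv bij_inv_Bij)

lemma word_eval_Bij: "set (map fst w) \<subseteq> Bij W \<Longrightarrow> word_eval (BijGroup W) w \<in> Bij W"
proof (induction w)
  case Nil
  show ?case using monoid.one_closed[OF group.is_monoid[OF group_BijGroup]]
    by (simp add: word_eval_Nil carrier_BijGroup)
next
  case (Cons l w)
  then have "letter_eval (BijGroup W) l \<in> Bij W" "word_eval (BijGroup W) w \<in> Bij W"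
    by (simp_all add: letter_eval_Bij)
  then show ?case using monoid.m_closed[OF group.is_monoid[OF group_BijGroup]]
    by (simp add: word_eval_Cons carrier_BijGroup)
qed

lemma reduced_word_ConsD: assumes "reduced_word (l # w)" shows "reduced_word w"
  unfolding reduced_word_def
proof (intro allI impI)
  fix i assume "Suc i < length w"
  then have "Suc (Suc i) < length (l # w)" by simp
  with assms have "\<not> (fst ((l # w) ! Suc i) = fst ((l # w) ! Suc (Suc i))
      \<and> snd ((l # w) ! Suc i) \<noteq> snd ((l # w) ! Suc (Suc i)))"
    unfolding reduced_word_def by blast
  then show "\<not> (fst (w ! i) = fst (w ! Suc i) \<and> snd (w ! i) \<noteq> snd (w ! Suc i))" by simp
qed

lemma reduced_word_Cons_Cons:
  assumes "reduced_word (l # l' # w)" shows "l' \<noteq> (fst l, \<not> snd l)"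
proof -
  have "\<not> (fst ((l # l' # w) ! 0) = fst ((l # l' # w) ! Suc 0)
      \<and> snd ((l # l' # w) ! 0) \<noteq> snd ((l # l' # w) ! Suc 0))"
    using assms unfolding reduced_word_def by (metis length_Cons zero_less_Suc Suc_less_eq)
  then show ?thesis by (cases l') auto
qed

lemma letter_eval_pow:
  assumes "f \<in> Bij W" "y \<in> W"
  shows "letter_eval (BijGroup W) (f [^]\<^bsub>BijGroup W\<^esub> (n::nat), e) y
    = ((if e then f else bij_inv W f) ^^ n) y"
proof (cases e)
  case True
  then show ?thesis using pow_BijGroup_apply[OF assms] by (simp add: letter_eval_def)
next
  case False
  have "f \<in> carrier (BijGroup W)" using assms(1) by (simp add: carrier_BijGroup)
  then have "inv\<^bsub>BijGroup W\<^esub> (f [^]\<^bsub>BijGroup W\<^esub> n) = bij_inv W f [^]\<^bsub>BijGroup W\<^esub> n"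
    using group.nat_pow_inv[OF group_BijGroup, of f W n] inv_BijGroup_eq_bij_inv[OF assms(1)] by simp
  with False show ?thesis
    using pow_BijGroup_apply[OF bij_inv_Bij[OF assms(1)] assms(2)] by (simp add: letter_eval_def)
qed

lemma ping_pong_word:
  fixes X :: "('a \<Rightarrow> 'a) \<times> bool \<Rightarrow> 'a set"
  assumes S: "S \<subseteq> Bij W"
    and maps: "\<And>l l' y. fst l \<in> S \<Longrightarrow> fst l' \<in> S \<Longrightarrow> l' \<noteq> (fst l, \<not> snd l) \<Longrightarrow> y \<in> X l'
      \<Longrightarrow> letter_eval (BijGroup W) l y \<in> X l"
    and b: "b \<in> W" "\<And>l. fst l \<in> S \<Longrightarrow> letter_eval (BijGroup W) l b \<in> X l"
    and w: "w \<noteq> []" "set (map fst w) \<subseteq> S" "reduced_word w"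
  shows "word_eval (BijGroup W) w b \<in> X (hd w)"
  using w
proof (induction w)
  case (Cons l w)
  have "letter_eval (BijGroup W) l \<in> Bij W" "word_eval (BijGroup W) w \<in> Bij W"
    using subset_trans[OF Cons.prems(2) S] by (simp_all add: letter_eval_Bij word_eval_Bij)
  then have "word_eval (BijGroup W) (l # w) b = letter_eval (BijGroup W) l (word_eval (BijGroup W) w b)"
    by (simp add: word_eval_Cons mult_BijGroup_apply b(1))
  moreover have "letter_eval (BijGroup W) l (word_eval (BijGroup W) w b) \<in> X l"
  proof (cases w)
    case Nil
    then show ?thesis using Cons.prems(2) b by (simp add: word_eval_Nil BijGroup_def)
  next
    case (Cons l' w')
    then have "word_eval (BijGroup W) w b \<in> X l'"
      using Cons.IH reduced_word_ConsD[OF Cons.prems(3)] Cons.prems(2) by simp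
    moreover have "l' \<noteq> (fst l, \<not> snd l)"
      using Cons.prems(3) \<open>w = l' # w'\<close> reduced_word_Cons_Cons by blast
    moreover have "fst l \<in> S" "fst l' \<in> S" using Cons.prems(2) \<open>w = l' # w'\<close> by auto
    ultimately show ?thesis using maps by blast
  qed
  ultimately show ?case by simp
qed simp

lemma ping_pong:
  fixes X :: "('a \<Rightarrow> 'a) \<times> bool \<Rightarrow> 'a set"
  assumes S: "S \<subseteq> Bij W"
    and maps: "\<And>l l' y. fst l \<in> S \<Longrightarrow> fst l' \<in> S \<Longrightarrow> l' \<noteq> (fst l, \<not> snd l) \<Longrightarrow> y \<in> X l'
      \<Longrightarrow> letter_eval (BijGroup W) l y \<in> X l"
    and b: "b \<in> W" "\<And>l. fst l \<in> S \<Longrightarrow> b \<notin> X l"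
      "\<And>l. fst l \<in> S \<Longrightarrow> letter_eval (BijGroup W) l b \<in> X l"
  shows "free_basis (BijGroup W) S"
  unfolding free_basis_def
proof (intro conjI allI impI)
  fix w assume w: "set (map fst w) \<subseteq> S" "reduced_word w" "w \<noteq> []"
  have "word_eval (BijGroup W) w b \<in> X (hd w)"
    by (rule ping_pong_word[where X = X and b = b and w = w, OF S maps b(1,3) w(3,1,2)])
  moreover have "fst (hd w) \<in> S" using w by (cases w) auto
  ultimately have "word_eval (BijGroup W) w b \<noteq> b" using b(2) by metis
  then show "word_eval (BijGroup W) w \<noteq> \<one>\<^bsub>BijGroup W\<^esub>"
    using b(1) by (auto simp: BijGroup_def)
qed (use S in \<open>simp add: BijGroup_def\<close>)

lemma ping_pong_pair:
  fixes W :: "'a set" and g h :: "'a \<Rightarrow> 'a" and X :: "bool \<Rightarrow> bool \<Rightarrow> 'a set"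
  assumes gh: "g \<in> Bij W" "h \<in> Bij W"
    and maps: "\<And>a e a' e' y. (a', e') \<noteq> (a, \<not> e) \<Longrightarrow> y \<in> X a' e'
      \<Longrightarrow> letter_eval (BijGroup W) (if a then g else h, e) y \<in> X a e"
    and b: "b \<in> W" "\<And>a e. b \<notin> X a e"
      "\<And>a e. letter_eval (BijGroup W) (if a then g else h, e) b \<in> X a e"
    and disjoint: "\<And>e e'. X True e \<inter> X False e' = {}"
  shows "g \<noteq> h" "free_basis (BijGroup W) {g, h}"
proof -
  show "g \<noteq> h"
  proof
    assume "g = h"
    then have "letter_eval (BijGroup W) (g, True) b \<in> X True True \<inter> X False True"
      using b(3)[of True True] b(3)[of False True] by simp
    then show False using disjoint by blast
  qed
  have letter: "letter_eval (BijGroup W) l = letter_eval (BijGroup W) (if fst l = g then g else h, snd l)"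
    if "fst l \<in> {g, h}" for l
    using that by (cases l) auto
  show "free_basis (BijGroup W) {g, h}"
  proof (rule ping_pong[where X = "\<lambda>l. X (fst l = g) (snd l)" and b = b])
    fix l l' :: "('a \<Rightarrow> 'a) \<times> bool" and y assume l: "fst l \<in> {g, h}" and l': "fst l' \<in> {g, h}"
      and ne: "l' \<noteq> (fst l, \<not> snd l)" and y: "y \<in> X (fst l' = g) (snd l')"
    have "(fst l' = g, snd l') \<noteq> (fst l = g, \<not> snd l)"
    proof
      assume "(fst l' = g, snd l') = (fst l = g, \<not> snd l)"
      then have "fst l' = fst l" "snd l' = (\<not> snd l)" using l l' by auto
      then show False using ne by (simp add: prod_eq_iff)
    qed
    from maps[OF this y] show "letter_eval (BijGroup W) l y \<in> X (fst l = g) (snd l)"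
      by (simp only: letter[OF l])
  next
    fix l :: "('a \<Rightarrow> 'a) \<times> bool" assume l: "fst l \<in> {g, h}"
    show "b \<notin> X (fst l = g) (snd l)" using b(2) .
    show "letter_eval (BijGroup W) l b \<in> X (fst l = g) (snd l)"
      using b(3)[of "fst l = g" "snd l"] by (simp only: letter[OF l])
  qed (use gh b(1) in simp_all)
qed

lemma (in group) generate_nat_pow_closed:
  "x \<in> generate G H \<Longrightarrow> x [^] (n::nat) \<in> generate G H"
  by (induction n) (simp_all add: generate.one generate.eng)

section \<open>Two automorphisms with disjoint fixed point sets, commuting with a translation\<close>

locale alternating_fixed_points =
  fixes W :: "real set" and \<alpha> \<beta> z :: "real \<Rightarrow> real" and p q :: real
  assumes closed_W: "closed W"
    and Aut_\<alpha>: "\<alpha> \<in> Aut_ord W" and Aut_\<beta>: "\<beta> \<in> Aut_ord W" and Aut_z: "z \<in> Aut_ord W"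
    and z_fixed_point_free: "Fix_on W z = {}"
    and z_\<alpha>: "\<And>x. x \<in> W \<Longrightarrow> z (\<alpha> x) = \<alpha> (z x)"
    and z_\<beta>: "\<And>x. x \<in> W \<Longrightarrow> z (\<beta> x) = \<beta> (z x)"
    and Fix_disjoint: "Fix_on W \<alpha> \<inter> Fix_on W \<beta> = {}"
    and p: "p \<in> Fix_on W \<alpha>" "p < z p"
    and q: "q \<in> Fix_on W \<beta>" "q < p"
begin

definition gen :: "bool \<Rightarrow> real \<Rightarrow> real" where
  "gen a = (if a then \<alpha> else \<beta>)"

abbreviation Fix_gen :: "nat \<Rightarrow> real set" where
  "Fix_gen k \<equiv> Fix_on W (gen (odd k))"

lemma gen_Aut: "gen a \<in> Aut_ord W"
  by (simp add: gen_def Aut_\<alpha> Aut_\<beta>)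

lemma gen_Bij: "gen a \<in> Bij W"
  by (rule Aut_ord_Bij[OF gen_Aut])

lemma z_gen: "x \<in> W \<Longrightarrow> z (gen a x) = gen a (z x)"
  by (simp add: gen_def z_\<alpha> z_\<beta>)

lemma z_mem: "x \<in> W \<Longrightarrow> z x \<in> W"
  by (rule Aut_ord_mem[OF Aut_z])

lemma Fix_gen_closed: "closed (Fix_gen k)"
  by (rule closed_Fix_on[OF closed_W gen_Aut])

lemma Fix_gen_subset: "Fix_gen k \<subseteq> W"
  by (auto simp: Fix_on_iff)

lemma Fix_gen_shift: "z ` Fix_gen k \<subseteq> Fix_gen k" "bij_inv W z ` Fix_gen k \<subseteq> Fix_gen k"
proof -
  note invariant = Fix_on_shift_invariant[of "gen (odd k)" W z, OF gen_Bij Aut_ord_Bij[OF Aut_z] z_gen]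
  show "z ` Fix_gen k \<subseteq> Fix_gen k" by (rule invariant(1))
  show "bij_inv W z ` Fix_gen k \<subseteq> Fix_gen k" by (rule invariant(2))
qed

lemma Fix_gen_Suc_disjoint: "x \<in> Fix_gen (Suc k) \<Longrightarrow> x \<notin> Fix_gen k"
  using Fix_disjoint by (auto simp: gen_def)

lemma Fix_gen_unbounded: "\<exists>t\<in>Fix_gen k. c < t"
proof (rule Fix_on_unbounded_above[of W z "gen (odd k)", OF closed_W Aut_z z_fixed_point_free gen_Bij z_gen])
  show "Fix_gen k \<noteq> {}" using p(1) q(1) by (cases "odd k") (auto simp: gen_def)
qed

text \<open>\<open>chain k\<close> is fixed by \<open>gen (odd (Suc k))\<close>, and the arc of \<open>k\<close> is the component of the
  complement of \<open>Fix_gen k\<close> that contains it, from \<open>arc_start k\<close> to \<open>chain (Suc k)\<close>.\<close>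
primrec chain :: "nat \<Rightarrow> real" where
  "chain 0 = p"
| "chain (Suc k) = next_in (Fix_gen k) (chain k)"

declare chain.simps(2)[simp del]

lemma chain_mem_Fix_gen: "chain k \<in> Fix_gen (Suc k)"
proof (induction k)
  case 0
  show ?case using p by (simp add: gen_def)
next
  case (Suc k)
  obtain t where "t \<in> Fix_gen k" "chain k < t" using Fix_gen_unbounded by blast
  then have "chain (Suc k) \<in> Fix_gen k"
    using next_in_mem(1)[OF Fix_gen_closed Fix_gen_Suc_disjoint[OF Suc.IH]] by (simp add: chain.simps(2))
  then show ?case by simp
qed

lemma chain_W: "chain k \<in> W"
  using chain_mem_Fix_gen Fix_gen_subset by blast

lemma chain_not_Fix_gen: "chain k \<notin> Fix_gen k"
  by (rule Fix_gen_Suc_disjoint[OF chain_mem_Fix_gen])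

lemma chain_Suc: "chain (Suc k) \<in> Fix_gen k" "chain k < chain (Suc k)"
proof -
  obtain t where "t \<in> Fix_gen k" "chain k < t" using Fix_gen_unbounded by blast
  then show "chain (Suc k) \<in> Fix_gen k" "chain k < chain (Suc k)"
    using next_in_mem[OF Fix_gen_closed chain_not_Fix_gen] by (simp_all add: chain.simps(2))
qed

lemma chain_Suc_le: "t \<in> Fix_gen k \<Longrightarrow> chain k < t \<Longrightarrow> chain (Suc k) \<le> t"
  by (simp add: next_in_le chain.simps(2))

lemma strict_mono_chain: "strict_mono chain"
  by (simp add: strict_mono_Suc_iff chain_Suc(2))

lemma p_le_chain: "p \<le> chain k"
  using strict_mono_less_eq[OF strict_mono_chain, of 0 k] by simp

lemma Fix_gen_below_chain: "\<exists>t\<in>Fix_gen k. t < chain k"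
proof (cases "odd k")
  case True
  then have "p \<in> Fix_gen k" using p(1) by (simp add: gen_def)
  then have "p \<noteq> chain k" using chain_not_Fix_gen[of k] by auto
  then show ?thesis using \<open>p \<in> Fix_gen k\<close> p_le_chain[of k] by force
next
  case False
  then have "q \<in> Fix_gen k" "q < chain k" using q p_le_chain[of k] by (simp_all add: gen_def)
  then show ?thesis by blast
qed

definition arc_start :: "nat \<Rightarrow> real" where
  "arc_start k = prev_in (Fix_gen k) (chain k)"

lemma arc_start: "arc_start k \<in> Fix_gen k" "arc_start k < chain k"
proof -
  obtain t where "t \<in> Fix_gen k" "t < chain k" using Fix_gen_below_chain by blast
  from prev_in_mem[OF Fix_gen_closed chain_not_Fix_gen this]
  show "arc_start k \<in> Fix_gen k" "arc_start k < chain k" unfolding arc_start_def by auto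
qed

lemma arc_start_W: "arc_start k \<in> W"
  using arc_start(1) Fix_gen_subset by blast

lemma chain_le_arc_start: "chain k \<le> arc_start (Suc k)"
  unfolding arc_start_def using chain_mem_Fix_gen chain_Suc(2) by (rule prev_in_ge)

lemma arc_fixed_point_free:
  assumes y: "y \<in> W" "arc_start k < y" "y < chain (Suc k)" shows "gen (odd k) y \<noteq> y"
proof
  assume "gen (odd k) y = y"
  with y(1) have fixed: "y \<in> Fix_gen k" by (simp add: Fix_on_iff)
  consider "y < chain k" | "y = chain k" | "chain k < y" by linarith
  then show False
  proof cases
    case 1
    then show False using prev_in_ge[OF fixed 1] y(2) by (simp add: arc_start_def)
  next
    case 2
    then show False using fixed chain_not_Fix_gen by simp
  next
    case 3
    then show False using chain_Suc_le[OF fixed] y(3) by simp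
  qed
qed

text \<open>Otherwise the suprema of the even and of the odd part of the chain coincide, and this common
  limit is fixed by both \<open>\<alpha>\<close> and \<open>\<beta>\<close>, since their fixed point sets are closed.\<close>
lemma chain_unbounded: "\<exists>n. c < chain n"
proof (rule ccontr)
  assume "\<nexists>n. c < chain n"
  then have bound: "chain n \<le> c" for n by (simp add: not_less)
  define A where "A = range (\<lambda>n. chain (2 * n))"
  define B where "B = range (\<lambda>n. chain (Suc (2 * n)))"
  have bdd: "bdd_above A" "bdd_above B" using bound by (auto simp: A_def B_def bdd_above_def)
  have "chain (2 * n) \<in> Fix_gen 1" "chain (Suc (2 * n)) \<in> Fix_gen 0" for n
    using chain_mem_Fix_gen[of "2 * n"] chain_mem_Fix_gen[of "Suc (2 * n)"] by simp_all
  then have fixed: "A \<subseteq> Fix_gen 1" "B \<subseteq> Fix_gen 0" by (auto simp: A_def B_def)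
  have nonempty: "A \<noteq> {}" "B \<noteq> {}" by (simp_all add: A_def B_def)
  have "Sup A \<in> Fix_gen 1" "Sup B \<in> Fix_gen 0"
    by (rule closed_subset_contains_Sup[OF Fix_gen_closed fixed(1) nonempty(1) bdd(1)],
        rule closed_subset_contains_Sup[OF Fix_gen_closed fixed(2) nonempty(2) bdd(2)])
  moreover have "chain (2 * n) \<le> Sup B" for n
    using chain_Suc(2)[of "2 * n"] cSup_upper[OF _ bdd(2), of "chain (Suc (2 * n))"]
    by (simp add: B_def)
  then have "Sup A \<le> Sup B" by (auto simp: A_def intro: cSup_least)
  moreover have "chain (Suc (2 * n)) \<le> Sup A" for n
  proof -
    have "chain (2 * Suc n) \<in> A" unfolding A_def by blast
    then have "chain (2 * Suc n) \<le> Sup A" using bdd(1) by (rule cSup_upper)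
    moreover have "chain (Suc (2 * n)) < chain (2 * Suc n)"
      using strict_monoD[OF strict_mono_chain, of "Suc (2 * n)" "2 * Suc n"] by simp
    ultimately show ?thesis by simp
  qed
  then have "Sup B \<le> Sup A" by (auto simp: B_def intro: cSup_least)
  ultimately show False using Fix_gen_Suc_disjoint[of "Sup A" 0] by simp
qed

definition period :: nat where
  "period = (LEAST n. z p < chain (Suc n))"

lemma chain_Suc_period_gt: "z p < chain (Suc period)"
proof -
  obtain n where n: "z p < chain n" using chain_unbounded by blast
  have "n \<noteq> 0"
  proof
    assume "n = 0"
    with n p(2) show False by simp
  qed
  then obtain m where "n = Suc m" using not0_implies_Suc by blast
  with n have "\<exists>m. z p < chain (Suc m)" by blast
  then show ?thesis unfolding period_def by (rule LeastI_ex)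
qed

lemma chain_period_le: "chain period \<le> z p"
proof (cases period)
  case 0
  then show ?thesis using p(2) by simp
next
  case (Suc k)
  then have "\<not> z p < chain (Suc k)" using not_less_Least[of k "\<lambda>n. z p < chain (Suc n)"]
    unfolding period_def by simp
  then show ?thesis using Suc by simp
qed

lemma even_period: "even period"
proof (rule ccontr)
  assume "odd period"
  then have "z p \<in> Fix_gen period" using Fix_gen_shift(1)[of 1] p(1) by (auto simp: gen_def)
  moreover from this have "chain period \<noteq> z p" using chain_not_Fix_gen[of period] by auto
  ultimately have "chain (Suc period) \<le> z p"
    using chain_Suc_le chain_period_le by (simp add: order.strict_iff_order)
  then show False using chain_Suc_period_gt by simp
qed

lemma Fix_gen_add_period: "Fix_gen (k + period) = Fix_gen k"
  using even_period by simp

text \<open>One period of the chain ends exactly one translation further: the first \<open>\<beta>\<close>-fixed point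
  above \<open>chain period\<close> is also the first one above \<open>z p\<close>, that is, \<open>z (chain 1)\<close>.\<close>
lemma chain_Suc_period: "chain (Suc period) = z (chain 1)"
proof -
  have "chain period < t \<longleftrightarrow> z p < t" if "t \<in> Fix_gen period" for t
  proof
    assume "chain period < t"
    then show "z p < t" using chain_Suc_le[OF that] chain_Suc_period_gt by simp
  next
    assume "z p < t"
    then show "chain period < t" using chain_period_le by simp
  qed
  then have "{t \<in> Fix_gen period. chain period < t} = {t \<in> Fix_gen period. z p < t}"
    by blast
  then have "chain (Suc period) = next_in (Fix_gen 0) (z p)"
    using even_period by (simp add: next_in_def chain.simps(2))
  also have "\<dots> = z (next_in (Fix_gen 0) p)"
  proof -
    obtain t where t: "t \<in> Fix_gen 0" "p < t" using Fix_gen_unbounded by blast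
    have "p \<in> W" "p \<notin> Fix_gen 0"
      using p(1) Fix_gen_Suc_disjoint[of p 0] by (auto simp: gen_def Fix_on_iff)
    from next_in_shift[OF Aut_z Fix_gen_closed Fix_gen_subset Fix_gen_shift this t] show ?thesis .
  qed
  finally show ?thesis by (simp add: chain.simps(2))
qed

lemma period_pos: "0 < period"
proof (rule ccontr)
  assume "\<not> 0 < period"
  then have "period = 0" by simp
  from chain_Suc_period have "chain (Suc 0) = z (chain (Suc 0))"
    unfolding \<open>period = 0\<close> One_nat_def .
  then have "chain (Suc 0) \<in> Fix_on W z"
    using chain_W[of "Suc 0"] unfolding Fix_on_def by (blast intro: sym)
  then show False using z_fixed_point_free by blast
qed

lemma two_le_period: "2 \<le> period"
  using period_pos even_period by (auto elim: evenE)

lemma chain_shift: "1 \<le> k \<Longrightarrow> chain (k + period) = z (chain k)"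
proof (induction k rule: nat_induct_at_least)
  case base
  then show ?case using chain_Suc_period by simp
next
  case (Suc k)
  have "chain (Suc k + period) = next_in (Fix_gen k) (z (chain k))"
    using Suc.IH Fix_gen_add_period by (simp add: chain.simps(2))
  also have "\<dots> = z (chain (Suc k))"
    using next_in_shift[OF Aut_z Fix_gen_closed Fix_gen_subset Fix_gen_shift chain_W chain_not_Fix_gen
        chain_Suc] by (simp add: chain.simps(2))
  finally show ?case by (simp add: chain.simps(2))
qed

lemma arc_start_shift: assumes "1 \<le> k" shows "arc_start (k + period) = z (arc_start k)"
proof -
  obtain t where "t \<in> Fix_gen k" "t < chain k" using Fix_gen_below_chain by blast
  then have "prev_in (Fix_gen k) (z (chain k)) = z (prev_in (Fix_gen k) (chain k))"
    by (rule prev_in_shift[OF Aut_z Fix_gen_closed Fix_gen_subset Fix_gen_shift chain_W chain_not_Fix_gen])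
  then show ?thesis unfolding arc_start_def using chain_shift[OF assms] Fix_gen_add_period by simp
qed

lemma period_induct[case_names base step]:
  assumes "\<And>k. k < period \<Longrightarrow> P k" "\<And>k. P k \<Longrightarrow> P (k + period)"
  shows "P k"
proof (induction k rule: less_induct)
  case (less k)
  show ?case
  proof (cases "k < period")
    case False
    then have "P (k - period)" using less.IH period_pos by simp
    then show ?thesis using assms(2)[of "k - period"] False by simp
  qed (rule assms(1))
qed

text \<open>\<open>mid k\<close> lies in the overlap of the arcs of \<open>k\<close> and \<open>Suc k\<close>; the points are chosen in one
  period and translated, so that \<open>mid (k + period) = z (mid k)\<close>.\<close>
definition mid0 :: "nat \<Rightarrow> real" where
  "mid0 k = (SOME u. u \<in> W \<and> arc_start (Suc k) < u \<and> u < chain (Suc k))"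

definition mid :: "nat \<Rightarrow> real" where
  "mid k = (z ^^ (k div period)) (mid0 (k mod period))"

lemma mid0: "mid0 k \<in> W \<and> arc_start (Suc k) < mid0 k \<and> mid0 k < chain (Suc k)"
proof -
  have x: "arc_start (Suc k) \<in> W" "arc_start k < arc_start (Suc k)" "arc_start (Suc k) < chain (Suc k)"
    using arc_start_W arc_start(2)[of k] chain_le_arc_start[of k] arc_start(2)[of "Suc k"] by simp_all
  then have "gen (odd k) (arc_start (Suc k)) \<noteq> arc_start (Suc k)" by (intro arc_fixed_point_free)
  then have "\<exists>u. u \<in> W \<and> arc_start (Suc k) < u \<and> u < chain (Suc k)"
    using moved_point_between[OF gen_Aut x(1) _ chain_Suc(1) x(3)] by blast
  then show ?thesis unfolding mid0_def by (rule someI_ex)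
qed

lemma mid_shift: "mid (k + period) = z (mid k)"
  using period_pos by (simp add: mid_def)

lemma mid_bounds: "mid k \<in> W \<and> arc_start (Suc k) < mid k \<and> mid k < chain (Suc k)"
proof (induction k rule: period_induct)
  case (base k)
  then show ?case using mid0[of k] by (simp add: mid_def)
next
  case (step k)
  have "Suc (k + period) = Suc k + period" by simp
  then show ?case
    using step mid_shift[of k] chain_shift[of "Suc k"] arc_start_shift[of "Suc k"]
      Aut_ord_less_iff[OF Aut_z] z_mem arc_start_W chain_W by simp
qed

lemma mid_W: "mid k \<in> W"
  using mid_bounds by blast

lemma arc_start_less_mid: "arc_start (Suc k) < mid k"
  using mid_bounds by blast

lemma mid_less_chain: "mid k < chain (Suc k)"
  using mid_bounds by blast

lemma chain_less_mid: "chain k < mid k"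
  using chain_le_arc_start[of k] arc_start_less_mid[of k] by simp

lemma strict_mono_mid: "strict_mono mid"
  unfolding strict_mono_Suc_iff
proof
  fix n show "mid n < mid (Suc n)" using mid_less_chain[of n] chain_less_mid[of "Suc n"] by simp
qed

lemma mid_shift_funpow: "(z ^^ n) (mid k) = mid (k + n * period)"
  by (induction n) (simp_all add: mid_shift[symmetric] algebra_simps)

definition step :: "bool \<Rightarrow> bool \<Rightarrow> real \<Rightarrow> real" where
  "step a e = (if e then gen a else bij_inv W (gen a))"

lemma step_Aut: "step a e \<in> Aut_ord W"
  by (simp add: step_def gen_Aut Aut_ord_bij_inv)

lemma step_mem: "y \<in> W \<Longrightarrow> step a e y \<in> W"
  by (rule Aut_ord_mem[OF step_Aut])

lemma z_step: assumes "y \<in> W" shows "z (step a e y) = step a e (z y)"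
proof -
  have "gen a (z x) = z (gen a x)" if "x \<in> W" for x using z_gen[OF that] by simp
  then have "bij_inv W (gen a) (z y) = z (bij_inv W (gen a) y)"
    by (rule bij_inv_commute[of z W "gen a", OF Aut_ord_Bij[OF Aut_z] gen_Bij _ assms])
  then show ?thesis using z_gen[OF assms] by (simp add: step_def)
qed

lemma step_funpow_mem: "y \<in> W \<Longrightarrow> (step a e ^^ n) y \<in> W"
  by (induction n) (simp_all add: step_mem)

lemma step_funpow_commute:
  assumes "y \<in> W" shows "(step a e ^^ n) ((z ^^ m) y) = (z ^^ m) ((step a e ^^ n) y)"
proof -
  have commute: "step a e (z x) = z (step a e x)" if "x \<in> W" for x using z_step[OF that] by simp
  show ?thesis using funpow_commute_on[of W z "step a e", OF z_mem step_mem commute assms] .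
qed

lemma step_fixes: "t \<in> Fix_on W (gen a) \<Longrightarrow> step a e t = t"
  by (simp add: step_def Fix_on_iff bij_inv_fixed gen_Bij)

lemma step_fixed_point: assumes "y \<in> W" "step a e y = y" shows "gen a y = y"
proof (cases e)
  case True
  with assms(2) show ?thesis by (simp add: step_def)
next
  case False
  then have "bij_inv W (gen a) y = y" using assms(2) by (simp add: step_def)
  then show ?thesis using apply_bij_inv[OF gen_Bij assms(1), of a] by simp
qed

lemma step_inverse: "y \<in> W \<Longrightarrow> step a (\<not> e) (step a e y) = y"
  using bij_inv_apply[OF gen_Bij] apply_bij_inv[OF gen_Bij] by (simp add: step_def)

text \<open>\<open>up k\<close> is the letter of \<open>gen (odd k)\<close> that moves the points of the arc of \<open>k\<close> upwards.\<close>
definition dir :: "nat \<Rightarrow> bool" where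
  "dir k = (mid (k - 1) < gen (odd k) (mid (k - 1)))"

definition up :: "nat \<Rightarrow> real \<Rightarrow> real" where
  "up k = step (odd k) (dir k)"

definition down :: "nat \<Rightarrow> real \<Rightarrow> real" where
  "down k = step (odd k) (\<not> dir k)"

lemma mid_pred_in_arc:
  assumes "1 \<le> k" shows "arc_start k < mid (k - 1)" "mid (k - 1) < chain (Suc k)"
  using assms arc_start_less_mid[of "k - 1"] mid_less_chain[of "k - 1"] chain_Suc(2)[of k] by simp_all

lemma up_moves_up: assumes "1 \<le> k" shows "mid (k - 1) < up k (mid (k - 1))"
proof -
  have moved: "gen (odd k) (mid (k - 1)) \<noteq> mid (k - 1)"
    using arc_fixed_point_free[OF mid_W mid_pred_in_arc[OF assms]] .
  show ?thesis
  proof (cases "dir k")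
    case False
    then have "gen (odd k) (mid (k - 1)) < mid (k - 1)" using moved by (simp add: dir_def)
    with False show ?thesis using less_bij_inv_iff[OF gen_Aut mid_W mid_W] by (simp add: up_def step_def)
  qed (simp add: up_def step_def dir_def)
qed

lemma dir_shift: assumes "1 \<le> k" shows "dir (k + period) = dir k"
proof -
  have m: "mid (k + period - 1) = z (mid (k - 1))"
    using assms mid_shift[of "k - 1"] by (simp add: add.commute)
  have "dir (k + period) = (z (mid (k - 1)) < gen (odd k) (z (mid (k - 1))))"
    unfolding dir_def m using even_period by simp
  also have "\<dots> = (z (mid (k - 1)) < z (gen (odd k) (mid (k - 1))))"
    using z_gen[OF mid_W] by simp
  also have "\<dots> = dir k"
    using Aut_ord_less_iff[OF Aut_z mid_W Aut_ord_mem[OF gen_Aut mid_W]] by (simp add: dir_def)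
  finally show ?thesis .
qed

lemma up_shift: "1 \<le> k \<Longrightarrow> up (k + period) = up k"
  using dir_shift even_period by (simp add: up_def)

lemma orbit_exceeds_mid: assumes "1 \<le> k" shows "\<exists>n. mid k < (up k ^^ n) (mid (k - 1))"
proof (rule ccontr)
  assume "\<not> ?thesis"
  then have bound: "(up k ^^ n) (mid (k - 1)) \<le> mid k" for n by (simp add: not_less)
  have "\<exists>y\<in>Fix_on W (up k). mid (k - 1) \<le> y \<and> y \<le> mid k"
    unfolding up_def
    by (rule bounded_orbit_fixed_point[OF closed_W step_Aut mid_W])
      (use up_moves_up[OF assms] bound in \<open>simp_all add: up_def\<close>)
  then obtain y where y: "y \<in> Fix_on W (up k)" "mid (k - 1) \<le> y" "y \<le> mid k" by blast
  have "arc_start k < y" "y < chain (Suc k)"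
    using y mid_pred_in_arc[OF assms] mid_less_chain[of k] by simp_all
  moreover have "gen (odd k) y = y"
    using y(1) step_fixed_point[of y "odd k" "dir k"] by (simp add: up_def Fix_on_iff)
  moreover have "y \<in> W" using y(1) by (simp add: Fix_on_iff)
  ultimately show False using arc_fixed_point_free by blast
qed

lemma up_orbit_mono:
  assumes "1 \<le> k" "n \<le> N" shows "(up k ^^ n) (mid (k - 1)) \<le> (up k ^^ N) (mid (k - 1))"
proof -
  have "incseq (\<lambda>n. (up k ^^ n) (mid (k - 1)))"
    using Aut_ord_orbit_incseq[OF step_Aut mid_W] up_moves_up[OF assms(1)]
    by (simp add: up_def less_imp_le)
  then show ?thesis using incseqD assms(2) by blast
qed

lemma orbit_exceeds_mid_shift:
  assumes "mid (Suc j) < (up (Suc j) ^^ N) (mid j)"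
  shows "mid (Suc j + period) < (up (Suc j + period) ^^ N) (mid (j + period))"
proof -
  have orbit_W: "(up (Suc j) ^^ N) (mid j) \<in> W" unfolding up_def by (rule step_funpow_mem[OF mid_W])
  have "mid (Suc j + period) = z (mid (Suc j))" by (rule mid_shift)
  also have "\<dots> < z ((up (Suc j) ^^ N) (mid j))"
    using assms Aut_ord_less_iff[OF Aut_z mid_W orbit_W] by simp
  also have "\<dots> = (up (Suc j) ^^ N) (z (mid j))"
    using step_funpow_commute[where m = 1, OF mid_W] by (simp add: up_def)
  also have "\<dots> = (up (Suc j + period) ^^ N) (mid (j + period))"
    using up_shift[of "Suc j"] mid_shift[of j] by simp
  finally show ?thesis .
qed

text \<open>A single exponent works for all arcs: finitely many arcs per period, and the configuration
  is invariant under \<open>z\<close>.\<close>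
lemma uniform_exponent: "\<exists>N. \<forall>k\<ge>1. mid k < (up k ^^ N) (mid (k - 1))"
proof -
  have "\<forall>k\<in>{1..period}. \<exists>n. mid k < (up k ^^ n) (mid (k - 1))"
    using orbit_exceeds_mid by simp
  then obtain n where n: "\<forall>k\<in>{1..period}. mid k < (up k ^^ n k) (mid (k - 1))"
    by (auto dest: bchoice)
  define N where "N = Max (n ` {1..period})"
  have all: "mid (Suc j) < (up (Suc j) ^^ N) (mid j)" for j
  proof (induction j rule: period_induct)
    case (base j)
    then have "Suc j \<in> {1..period}" by simp
    then have "mid (Suc j) < (up (Suc j) ^^ n (Suc j)) (mid j)" "n (Suc j) \<le> N"
      using bspec[OF n] by (fastforce simp: N_def)+
    with up_orbit_mono[of "Suc j" "n (Suc j)" N] show ?case by simp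
  next
    case (step j)
    then show ?case using orbit_exceeds_mid_shift[OF step] by simp
  qed
  have "mid k < (up k ^^ N) (mid (k - 1))" if "1 \<le> k" for k
  proof -
    have "Suc (k - 1) = k" using that by simp
    with all[of "k - 1"] show ?thesis by simp
  qed
  then show ?thesis by blast
qed

definition exponent :: nat where
  "exponent = (SOME N. \<forall>k\<ge>1. mid k < (up k ^^ N) (mid (k - 1)))"

lemma mid_less_up_exponent: "1 \<le> k \<Longrightarrow> mid k < (up k ^^ exponent) (mid (k - 1))"
  using someI_ex[OF uniform_exponent] unfolding exponent_def by blast

lemma push_up:
  assumes k: "1 \<le> k" and y: "y \<in> W" "mid (k - 1) \<le> y" "y < chain (Suc k)"
  shows "mid k < (up k ^^ exponent) y" "(up k ^^ exponent) y < chain (Suc k)"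
proof -
  have "(up k ^^ exponent) (mid (k - 1)) \<le> (up k ^^ exponent) y"
    using Aut_ord_funpow_le_iff[OF step_Aut mid_W y(1)] y(2) by (simp add: up_def)
  then show "mid k < (up k ^^ exponent) y" using mid_less_up_exponent[OF k] by simp
  have "(up k ^^ exponent) y < (up k ^^ exponent) (chain (Suc k))"
    using Aut_ord_funpow_less_iff[OF step_Aut y(1) chain_W] y(3) by (simp add: up_def)
  moreover have "up k (chain (Suc k)) = chain (Suc k)"
    using step_fixes[OF chain_Suc(1)] by (simp add: up_def)
  then have "(up k ^^ exponent) (chain (Suc k)) = chain (Suc k)" by (rule funpow_fixed)
  ultimately show "(up k ^^ exponent) y < chain (Suc k)" by simp
qed

lemma push_down:
  assumes k: "1 \<le> k" and y: "y \<in> W" "arc_start k < y" "y \<le> mid k"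
  shows "arc_start k < (down k ^^ exponent) y" "(down k ^^ exponent) y < mid (k - 1)"
proof -
  have "(down k ^^ exponent) (arc_start k) < (down k ^^ exponent) y"
    using Aut_ord_funpow_less_iff[OF step_Aut arc_start_W y(1)] y(2) by (simp add: down_def)
  moreover have "down k (arc_start k) = arc_start k"
    using step_fixes[OF arc_start(1)] by (simp add: down_def)
  then have "(down k ^^ exponent) (arc_start k) = arc_start k" by (rule funpow_fixed)
  ultimately show "arc_start k < (down k ^^ exponent) y" by simp
  have "(down k ^^ exponent) y \<le> (down k ^^ exponent) (mid k)"
    using Aut_ord_funpow_le_iff[OF step_Aut y(1) mid_W] y(3) by (simp add: down_def)
  also have "\<dots> < (down k ^^ exponent) ((up k ^^ exponent) (mid (k - 1)))"
    using Aut_ord_funpow_less_iff[OF step_Aut mid_W step_funpow_mem[OF mid_W]] mid_less_up_exponent[OF k]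
    by (simp add: down_def up_def)
  also have "\<dots> = mid (k - 1)"
    by (rule funpow_left_inverse[of W "up k" "down k"])
      (simp_all add: up_def down_def step_mem step_inverse mid_W)
  finally show "(down k ^^ exponent) y < mid (k - 1)" .
qed

definition act :: "bool \<Rightarrow> bool \<Rightarrow> real \<Rightarrow> real" where
  "act a e = step a e ^^ exponent"

lemma act_mem: "y \<in> W \<Longrightarrow> act a e y \<in> W"
  unfolding act_def by (rule step_funpow_mem)

definition upper_end :: "nat \<Rightarrow> real set" where
  "upper_end k = {y \<in> W. mid k < y \<and> y < chain (Suc k)}"

definition lower_end :: "nat \<Rightarrow> real set" where
  "lower_end k = {y \<in> W. arc_start k < y \<and> y < mid (k - 1)}"

text \<open>The ends of the arcs of \<open>gen a\<close> into which the letter \<open>(a, e)\<close> pushes points. Only arcs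
  with \<open>k \<ge> 2\<close> occur, so that neighbouring arcs exist; the ping-pong sets are therefore the
  points some forward translate of which lies here.\<close>
definition attracting :: "bool \<Rightarrow> bool \<Rightarrow> real set" where
  "attracting a e = (\<Union>k \<in> {k. 2 \<le> k \<and> odd k = a \<and> dir k = e}. upper_end k)
    \<union> (\<Union>k \<in> {k. 2 \<le> k \<and> odd k = a \<and> dir k \<noteq> e}. lower_end k)"

lemma act_into_attracting:
  assumes k: "2 \<le> k" and y: "y \<in> W"
    and up: "e = dir k \<Longrightarrow> mid (k - 1) \<le> y \<and> y < chain (Suc k)"
    and down: "e \<noteq> dir k \<Longrightarrow> arc_start k < y \<and> y \<le> mid k"
  shows "act (odd k) e y \<in> attracting (odd k) e"
proof (cases "e = dir k")
  case True
  then have "act (odd k) e y \<in> upper_end k"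
    using push_up[of k y] k y up True step_funpow_mem by (simp add: upper_end_def act_def up_def)
  then show ?thesis using k True unfolding attracting_def by blast
next
  case False
  then have "act (odd k) e y \<in> lower_end k"
    using push_down[of k y] k y down False step_funpow_mem by (simp add: lower_end_def act_def down_def)
  then show ?thesis using k False unfolding attracting_def by blast
qed

text \<open>The upper end of the arc of \<open>j\<close> lies in the core of the arc of \<open>Suc j\<close>, and the lower end
  in that of \<open>j - 1\<close>: letters of the other generator act there through these arcs, letters of
  the same generator keep the ends in place.\<close>
lemma act_upper_end:
  assumes j: "2 \<le> j" and y: "y \<in> upper_end j" and letter: "(odd j, dir j) \<noteq> (a, \<not> e)"
  shows "act a e y \<in> attracting a e"
proof -
  have y': "y \<in> W" "mid j < y" "y < chain (Suc j)" using y by (simp_all add: upper_end_def)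
  have "mid (j - 1) < mid j" "chain (Suc j) < chain (Suc (Suc j))" "chain (Suc j) < mid (Suc j)"
    using strict_mono_mid j chain_Suc(2) chain_less_mid by (simp_all add: strict_mono_less)
  moreover have "arc_start (Suc j) < mid j" by (rule arc_start_less_mid)
  ultimately show ?thesis
    using act_into_attracting[of j y e] act_into_attracting[of "Suc j" y e] j y' letter
    by (cases "a = odd j") auto
qed

lemma act_lower_end:
  assumes j: "3 \<le> j" and y: "y \<in> lower_end j" and letter: "(odd j, \<not> dir j) \<noteq> (a, \<not> e)"
  shows "act a e y \<in> attracting a e"
proof -
  define i where "i = j - 2"
  have i: "j = Suc (Suc i)" "1 \<le> i" using j by (simp_all add: i_def)
  have y': "y \<in> W" "arc_start j < y" "y < mid (Suc i)" using y i by (simp_all add: lower_end_def)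
  have "mid i < chain (Suc i)" "chain (Suc i) \<le> arc_start j" "arc_start (Suc i) < chain (Suc i)"
    "mid (Suc i) < mid j" "mid (Suc i) < chain j"
    using i mid_less_chain chain_le_arc_start arc_start(2) strict_mono_mid mid_less_chain
    by (simp_all add: strict_mono_less)
  then show ?thesis
    using act_into_attracting[of j y e] act_into_attracting[of "Suc i" y e] i y' letter
    by (cases "a = odd j") auto
qed

lemma upper_end_shift: "y \<in> upper_end k \<Longrightarrow> z y \<in> upper_end (k + period)"
  using chain_shift[of "Suc k"] mid_shift[of k] Aut_ord_less_iff[OF Aut_z] z_mem mid_W chain_W
  by (simp add: upper_end_def)

lemma lower_end_shift: "1 \<le> k \<Longrightarrow> y \<in> lower_end k \<Longrightarrow> z y \<in> lower_end (k + period)"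
  using arc_start_shift[of k] mid_shift[of "k - 1"] Aut_ord_less_iff[OF Aut_z] z_mem mid_W arc_start_W
  by (simp add: lower_end_def add.commute)

lemma attracting_shift:
  assumes "y \<in> attracting a e"
  obtains k where "2 \<le> k" "odd k = a" "dir k = e" "z y \<in> upper_end k"
  | k where "3 \<le> k" "odd k = a" "dir k \<noteq> e" "z y \<in> lower_end k"
proof -
  from assms consider k where "2 \<le> k" "odd k = a" "dir k = e" "y \<in> upper_end k"
    | k where "2 \<le> k" "odd k = a" "dir k \<noteq> e" "y \<in> lower_end k"
    unfolding attracting_def by blast
  then show ?thesis
  proof cases
    case 1
    then show ?thesis
      using that(1)[of "k + period"] upper_end_shift dir_shift even_period by simp
  next
    case 2
    then show ?thesis
      using that(2)[of "k + period"] lower_end_shift dir_shift even_period two_le_period by simp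
  qed
qed

lemma attracting_shift_mem: assumes "y \<in> attracting a e" shows "z y \<in> attracting a e"
  using assms
proof (rule attracting_shift)
  fix k assume "2 \<le> k" "odd k = a" "dir k = e" "z y \<in> upper_end k"
  then show ?thesis unfolding attracting_def by blast
next
  fix k assume k: "3 \<le> k" "odd k = a" "dir k \<noteq> e" "z y \<in> lower_end k"
  then have "2 \<le> k" by simp
  with k show ?thesis unfolding attracting_def by blast
qed

lemma act_shift_attracting:
  assumes "y \<in> attracting a' e'" "(a', e') \<noteq> (a, \<not> e)"
  shows "act a e (z y) \<in> attracting a e"
  using assms(1)
proof (rule attracting_shift)
  fix k assume "2 \<le> k" "odd k = a'" "dir k = e'" "z y \<in> upper_end k"
  then show ?thesis using act_upper_end[of k "z y" a e] assms(2) by auto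
next
  fix k assume "3 \<le> k" "odd k = a'" "dir k \<noteq> e'" "z y \<in> lower_end k"
  then show ?thesis using act_lower_end[of k "z y" a e] assms(2) by auto
qed

lemma attracting_between_mids:
  assumes "y \<in> attracting a e" shows "\<exists>i. odd i = a \<and> mid i < y \<and> y < mid (Suc i)"
proof -
  obtain k where k: "2 \<le> k" "odd k = a" "y \<in> upper_end k \<or> y \<in> lower_end k"
    using assms unfolding attracting_def by blast
  show ?thesis
  proof (cases "y \<in> upper_end k")
    case True
    then have "mid k < y" "y < mid (Suc k)"
      using mid_less_chain[of k] chain_less_mid[of "Suc k"] by (simp_all add: upper_end_def)
    with k(2) show ?thesis by blast
  next
    case False
    with k(3) have y: "arc_start k < y" "y < mid (k - 1)" by (simp_all add: lower_end_def)
    define i where "i = k - 2"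
    have i: "k = Suc (Suc i)" using k(1) by (simp add: i_def)
    have "mid i < arc_start k" using mid_less_chain[of i] chain_le_arc_start[of "Suc i"] i by simp
    with y i k(2) have "odd i = a" "mid i < y" "y < mid (Suc i)" by simp_all
    then show ?thesis by blast
  qed
qed

definition ping_pong_set :: "bool \<Rightarrow> bool \<Rightarrow> real set" where
  "ping_pong_set a e = {x \<in> W. \<exists>n. (z ^^ n) x \<in> attracting a e}"

lemma act_ping_pong_set:
  assumes x: "x \<in> ping_pong_set a' e'" and letter: "(a', e') \<noteq> (a, \<not> e)"
  shows "act a e x \<in> ping_pong_set a e"
proof -
  obtain n where "x \<in> W" "(z ^^ n) x \<in> attracting a' e'" using x by (auto simp: ping_pong_set_def)
  then have "act a e ((z ^^ Suc n) x) \<in> attracting a e"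
    using act_shift_attracting[OF _ letter] by simp
  moreover have "act a e ((z ^^ Suc n) x) = (z ^^ Suc n) (act a e x)"
    unfolding act_def by (rule step_funpow_commute[OF \<open>x \<in> W\<close>])
  ultimately have "(z ^^ Suc n) (act a e x) \<in> attracting a e" by simp
  then show ?thesis using act_mem[OF \<open>x \<in> W\<close>] unfolding ping_pong_set_def by blast
qed

lemma act_mid_period: "act a e (mid period) \<in> ping_pong_set a e"
proof -
  have bounds: "2 \<le> period" "mid period \<in> W" "mid (period - 1) < mid period"
    "mid period < mid (Suc period)" "mid period < chain (Suc period)"
    "mid period < chain (Suc (Suc period))" "arc_start period < mid period"
    "arc_start (Suc period) < mid period"
    using two_le_period mid_W strict_mono_mid mid_less_chain[of period] chain_Suc(2)[of "Suc period"]
      arc_start(2)[of period] chain_less_mid[of period] arc_start_less_mid[of period]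
    by (simp_all add: strict_mono_less)
  have "act (odd period) e (mid period) \<in> attracting (odd period) e"
    by (rule act_into_attracting) (use bounds in auto)
  moreover have "act (odd (Suc period)) e (mid period) \<in> attracting (odd (Suc period)) e"
    by (rule act_into_attracting) (use bounds in auto)
  ultimately have "act a e (mid period) \<in> attracting a e"
    using even_period by (cases a) simp_all
  then show ?thesis
    using act_mem mid_W by (auto simp: ping_pong_set_def intro: exI[of _ 0])
qed

lemma mid_period_notin_ping_pong_set: "mid period \<notin> ping_pong_set a e"
proof
  assume "mid period \<in> ping_pong_set a e"
  then obtain n where "mid (period + n * period) \<in> attracting a e"
    by (auto simp: ping_pong_set_def mid_shift_funpow)
  then obtain i where "mid i < mid (period + n * period)" "mid (period + n * period) < mid (Suc i)"
    using attracting_between_mids by blast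
  then have "i < period + n * period" "period + n * period < Suc i"
    using strict_mono_less[OF strict_mono_mid] by blast+
  then show False by simp
qed

lemma ping_pong_sets_disjoint: "ping_pong_set True e \<inter> ping_pong_set False e' = {}"
proof (rule equals0I)
  have later: "(z ^^ (m + n)) x \<in> attracting a e" if "(z ^^ n) x \<in> attracting a e" for m n x a e
    using that by (induction m) (simp_all add: attracting_shift_mem)
  fix x assume "x \<in> ping_pong_set True e \<inter> ping_pong_set False e'"
  then obtain n n' where n: "(z ^^ n) x \<in> attracting True e" "(z ^^ n') x \<in> attracting False e'"
    by (auto simp: ping_pong_set_def)
  define y where "y = (z ^^ (n' + n)) x"
  have "y \<in> attracting True e" using later[OF n(1)] by (simp add: y_def)
  then obtain i where i: "odd i" "mid i < y" "y < mid (Suc i)"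
    using attracting_between_mids by blast
  have "y \<in> attracting False e'" using later[OF n(2), of n] by (simp add: y_def add.commute)
  then obtain i' where i': "even i'" "mid i' < y" "y < mid (Suc i')"
    using attracting_between_mids by blast
  have "mid i < mid (Suc i')" "mid i' < mid (Suc i)" using i i' by simp_all
  then have "i = i'" using strict_mono_less[OF strict_mono_mid] by simp
  then show False using i(1) i'(1) by simp
qed

theorem contains_nonabelian_free:
  "contains_nonabelian_free (BijGroup W) (generate (BijGroup W) {\<alpha>, \<beta>})"
proof -
  define g h where "g = \<alpha> [^]\<^bsub>BijGroup W\<^esub> exponent" and "h = \<beta> [^]\<^bsub>BijGroup W\<^esub> exponent"
  have Bij: "\<alpha> \<in> Bij W" "\<beta> \<in> Bij W" using Aut_\<alpha> Aut_\<beta> by (simp_all add: Aut_ord_Bij)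
  have letter: "letter_eval (BijGroup W) (if a then g else h, e) y = act a e y" if "y \<in> W" for a e y
    using letter_eval_pow[OF Bij(1) that] letter_eval_pow[OF Bij(2) that]
    by (cases a) (simp_all add: g_def h_def act_def step_def gen_def)
  have X_W: "ping_pong_set a e \<subseteq> W" for a e by (auto simp: ping_pong_set_def)
  have gh_Bij: "g \<in> Bij W" "h \<in> Bij W"
    using monoid.nat_pow_closed[OF group.is_monoid[OF group_BijGroup]] Bij
    by (simp_all add: g_def h_def carrier_BijGroup)
  have maps: "letter_eval (BijGroup W) (if a then g else h, e) y \<in> ping_pong_set a e"
    if "(a', e') \<noteq> (a, \<not> e)" "y \<in> ping_pong_set a' e'" for a e a' e' y
  proof -
    have "y \<in> W" using that(2) X_W by blast
    then show ?thesis using letter act_ping_pong_set[OF that(2,1)] by simp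
  qed
  have base: "letter_eval (BijGroup W) (if a then g else h, e) (mid period) \<in> ping_pong_set a e"
    for a e
    using act_mid_period letter[OF mid_W] by simp
  note pair = ping_pong_pair[where X = ping_pong_set and b = "mid period",
      OF gh_Bij maps mid_W mid_period_notin_ping_pong_set base ping_pong_sets_disjoint]
  have "g \<noteq> h" by (rule pair(1))
  have "free_basis (BijGroup W) {g, h}" by (rule pair(2))
  have "g \<in> generate (BijGroup W) {\<alpha>, \<beta>}" "h \<in> generate (BijGroup W) {\<alpha>, \<beta>}"
    unfolding g_def h_def
    by (rule group.generate_nat_pow_closed[OF group_BijGroup], simp add: generate.incl)+
  then have "{g, h} \<subseteq> generate (BijGroup W) {\<alpha>, \<beta>}" by simp
  with \<open>free_basis (BijGroup W) {g, h}\<close> \<open>g \<noteq> h\<close> show ?thesis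
    unfolding contains_nonabelian_free_def by blast
qed

end

lemma upward_translation:
  assumes z: "z \<in> Aut_ord W" "Fix_on W z = {}" and p: "p \<in> W" and F: "F \<subseteq> Bij W"
    and commute: "\<And>f x. f \<in> F \<Longrightarrow> x \<in> W \<Longrightarrow> z (f x) = f (z x)"
  obtains z' where "z' \<in> Aut_ord W" "Fix_on W z' = {}" "p < z' p"
    "\<forall>f\<in>F. \<forall>x\<in>W. z' (f x) = f (z' x)"
proof (cases "p < z p")
  case True
  show ?thesis
  proof (rule that[of z])
    show "\<forall>f\<in>F. \<forall>x\<in>W. z (f x) = f (z x)" using commute by blast
  qed (use z True in simp_all)
next
  case False
  have "z p \<noteq> p" using z(2) p by (auto simp: Fix_on_iff)
  with False have "p < bij_inv W z p" using less_bij_inv_iff[OF z(1) p p] by simp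
  then show ?thesis
  proof (rule that[of "bij_inv W z", rotated 2])
    have "bij_inv W z (f x) = f (bij_inv W z x)" if "f \<in> F" "x \<in> W" for f x
    proof -
      have "f \<in> Bij W" using that(1) F by blast
      moreover have "z (f y) = f (z y)" if "y \<in> W" for y using commute[OF \<open>f \<in> F\<close> that] .
      ultimately show ?thesis by (rule bij_inv_commute[of f W z x, OF _ Aut_ord_Bij[OF z(1)] _ that(2)])
    qed
    then show "\<forall>f\<in>F. \<forall>x\<in>W. bij_inv W z (f x) = f (bij_inv W z x)" by blast
  qed (use Aut_ord_bij_inv[OF z(1)] Fix_on_bij_inv[OF Aut_ord_Bij[OF z(1)]] z(2) in simp_all)
qed

theorem lemma4p1:
  fixes W :: "real set" and \<alpha> \<beta> z :: "real \<Rightarrow> real"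
  assumes "W \<noteq> {}" and "closed W"
    and "\<alpha> \<in> Aut_ord W" and "\<beta> \<in> Aut_ord W" and "z \<in> Aut_ord W"
    and "Fix_on W z = {}"
    and "z \<otimes>\<^bsub>BijGroup W\<^esub> \<alpha> = \<alpha> \<otimes>\<^bsub>BijGroup W\<^esub> z"
    and "z \<otimes>\<^bsub>BijGroup W\<^esub> \<beta> = \<beta> \<otimes>\<^bsub>BijGroup W\<^esub> z"
    and "Fix_on W \<alpha> \<noteq> {}" and "Fix_on W \<beta> \<noteq> {}"
    and "Fix_on W \<alpha> \<inter> Fix_on W \<beta> = {}"
  shows "contains_nonabelian_free (BijGroup W) (generate (BijGroup W) {\<alpha>, \<beta>})"
proof -
  have Bij: "\<alpha> \<in> Bij W" "\<beta> \<in> Bij W" "z \<in> Bij W" using assms(3-5) by (simp_all add: Aut_ord_Bij)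
  have z_\<alpha>: "z (\<alpha> x) = \<alpha> (z x)" and z_\<beta>: "z (\<beta> x) = \<beta> (z x)" if "x \<in> W" for x
    using BijGroup_commute_apply[OF Bij(3,1) assms(7) that] BijGroup_commute_apply[OF Bij(3,2) assms(8) that]
    by simp_all
  then have commute: "z (f x) = f (z x)" if "f \<in> {\<alpha>, \<beta>}" "x \<in> W" for f x
    using that by blast
  obtain q where q: "q \<in> Fix_on W \<beta>" using assms(10) by blast
  obtain p where p: "p \<in> Fix_on W \<alpha>" "q < p"
    using Fix_on_unbounded_above[of W z \<alpha>, OF assms(2,5,6) Bij(1) z_\<alpha> assms(9)] by blast
  have "p \<in> W" "{\<alpha>, \<beta>} \<subseteq> Bij W" using p(1) Bij by (simp_all add: Fix_on_iff)
  then obtain z' where z': "z' \<in> Aut_ord W" "Fix_on W z' = {}" "p < z' p"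
    "\<forall>f\<in>{\<alpha>, \<beta>}. \<forall>x\<in>W. z' (f x) = f (z' x)"
    by (rule upward_translation[of z W p "{\<alpha>, \<beta>}", OF assms(5,6) _ _ commute])
  interpret alternating_fixed_points W \<alpha> \<beta> z' p q
    using assms(2-4,11) z' p q by unfold_locales simp_all
  show ?thesis by (rule contains_nonabelian_free)
qed

end
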